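(* Let $G=(V,E)$ be the bipartite graph with $V=\{v_1,\dots,v_{10}\}$ and the 14 edges $\{v_1,v_6\},\{v_1,v_7\},\{v_2,v_6\},\{v_2,v_7\},\{v_2,v_8\},\{v_3,v_7\},\{v_3,v_9\},\{v_3,v_{10}\},\{v_4,v_8\},\{v_4,v_9\},\{v_4,v_{10}\},\{v_5,v_8\},\{v_5,v_9\},\{v_5,v_{10}\}$, and let $R=\{\{v_2,v_7\},\{v_4,v_9\},\{v_5,v_{10}\}\}$. Let $y\in\mathbb{R}^E$ be given by $y_{\{v_1,v_6\}}=\frac23$ and $y_e=\frac13$ for all other $e\in E$. Then $y\in Q_{(G,R)}$.
   Context: For a bipartite graph $G=(V,E)$ with $|V|=2n$ (here $n=5$) and red edges $R$, let $\mathcal{L}_{\mathrm{all}}(G)$ be the set of labelings $L\colon V\to\{0,1\}$ with $|L^{-1}(1)|\equiv n\pmod 2$, and $E_L=\{\{u,v\}\in E\setminus R\colon L(u)=L(v)\}\cup\{\{u,v\}\in R\colon L(u)\ne L(v)\}$. Then $Q_{(G,R)}=\{x\in\mathbb{R}^E_{\ge0}\colon x(\delta(u))=1\ \forall u\in V,\ x(E_L)\ge1\ \forall L\in\mathcal{L}_{\mathrm{all}}(G)\}$, where $\delta(u)$ is the set of edges at $u$ and $x(S)=\sum_{e\in S}x_e$. *)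

theory Defs
  imports Complex_Main
begin

text \<open>Graphs: vertex set V, edges E as a set of 2-element vertex sets, red edges R \<subseteq> E.
  Vectors x in R^E are functions on edges (values outside E are irrelevant).\<close>

definition delta :: "'v set set \<Rightarrow> 'v \<Rightarrow> 'v set set" where
  "delta E u = {e \<in> E. u \<in> e}"

definition xsum :: "('v set \<Rightarrow> real) \<Rightarrow> 'v set set \<Rightarrow> real" where
  "xsum x S = (\<Sum>e\<in>S. x e)"

definition labelings_all :: "'v set \<Rightarrow> nat \<Rightarrow> ('v \<Rightarrow> bool) set" where
  "labelings_all V n = {L. card {v \<in> V. L v} mod 2 = n mod 2}"

definition E_L :: "'v set set \<Rightarrow> 'v set set \<Rightarrow> ('v \<Rightarrow> bool) \<Rightarrow> 'v set set" where
  "E_L E R L = {e \<in> E - R. \<exists>u v. e = {u, v} \<and> L u = L v}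
             \<union> {e \<in> R. \<exists>u v. e = {u, v} \<and> L u \<noteq> L v}"

definition Q_GR :: "'v set \<Rightarrow> 'v set set \<Rightarrow> 'v set set \<Rightarrow> nat \<Rightarrow> ('v set \<Rightarrow> real) set" where
  "Q_GR V E R n = {x. (\<forall>e\<in>E. x e \<ge> 0)
                      \<and> (\<forall>u\<in>V. xsum x (delta E u) = 1)
                      \<and> (\<forall>L\<in>labelings_all V n. xsum x (E_L E R L) \<ge> 1)}"

definition G19_V :: "nat set" where "G19_V = {1..10}"

definition G19_E :: "nat set set" where
  "G19_E = {{1,6},{1,7},{2,6},{2,7},{2,8},{3,7},{3,9},{3,10},{4,8},{4,9},{4,10},
            {5,8},{5,9},{5,10}}"

definition G19_R :: "nat set set" where
  "G19_R = {{2,7},{4,9},{5,10}}"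

definition y19 :: "nat set \<Rightarrow> real" where
  "y19 e = (if e = {1,6} then 2/3 else 1/3)"

end

theory Submission
  imports Defs
begin

text \<open>For the labelling constraints note that a
  perfect matching M satisfies |M \<inter> E_L| \<equiv> |M \<inter> R| (mod 2) whenever |L^-1(1)| \<equiv> n, so matchings
  with an odd number of red edges meet every E_L. But y is no convex combination of those: at
  least 1/3 of its weight lies on matchings through {v1,v6} and {v2,v8}, which must use {v3,v7}
  and so contain 0 or 2 red edges. Hence y(E_L) \<ge> 1 is checked over all 2^10 labellings, after
  writing y(E_L) and |L^-1(1)| as explicit sums.\<close>

lemma mem_E_L_doubleton:
  assumes "a \<noteq> b" "{a, b} \<in> E"
  shows "{a, b} \<in> E_L E R L \<longleftrightarrow> ({a, b} \<in> R \<longleftrightarrow> L a \<noteq> L b)"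
  using assms unfolding E_L_def by (auto simp: doubleton_eq_iff)

lemma E_L_subset: "R \<subseteq> E \<Longrightarrow> E_L E R L \<subseteq> E"
  unfolding E_L_def by auto

lemma sum_filter_conv_sum_list:
  fixes g :: "'a \<Rightarrow> 'b::semiring_1"
  assumes "distinct xs"
  shows "(\<Sum>e\<in>{e \<in> set xs. P e}. g e) = (\<Sum>e\<leftarrow>xs. of_bool (P e) * g e)"
  using sum_list_distinct_conv_sum_set[OF assms, of "\<lambda>e. of_bool (P e) * g e"]
  by (simp add: Collect_conj_eq)

definition G19_edge_list :: "nat set list" where
  "G19_edge_list = [{1,6},{1,7},{2,6},{2,7},{2,8},{3,7},{3,9},{3,10},{4,8},{4,9},{4,10},
                    {5,8},{5,9},{5,10}]"

lemma G19_E_eq_edge_list: "G19_E = set G19_edge_list"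
  unfolding G19_E_def G19_edge_list_def by simp

lemma distinct_G19_edge_list: "distinct G19_edge_list"
  unfolding G19_edge_list_def by (simp add: doubleton_eq_iff)

lemma G19_R_subset_E: "G19_R \<subseteq> G19_E"
  unfolding G19_R_def G19_E_def by auto

lemma xsum_filter_G19_E:
  "xsum x {e \<in> G19_E. P e} = (\<Sum>e\<leftarrow>G19_edge_list. of_bool (P e) * x e)"
  unfolding xsum_def G19_E_eq_edge_list
  using sum_filter_conv_sum_list[OF distinct_G19_edge_list] .

lemma G19_V_eq_list: "G19_V = set [1,2,3,4,5,6,7,8,9,10]"
proof -
  have upt_eq: "[1..<11] = [1,2,3,4,5,6,7,8,9,10::nat]"
    by (simp add: upt_conv_Cons)
  show ?thesis
    unfolding G19_V_def upt_eq[symmetric] by (simp add: atLeastAtMost_upt del: upt_rec_numeral)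
qed

lemma y19_degree:
  assumes "u \<in> G19_V"
  shows "xsum y19 (delta G19_E u) = 1"
proof -
  have "\<forall>u\<in>set [1,2,3,4,5,6,7,8,9,10]. xsum y19 (delta G19_E u) = 1"
    unfolding delta_def xsum_filter_G19_E
    by (simp add: G19_edge_list_def y19_def doubleton_eq_iff)
  then show ?thesis
    using assms G19_V_eq_list by blast
qed

lemma xsum_y19_E_L:
  "xsum y19 (E_L G19_E G19_R L) =
    2/3 * of_bool (L 1 = L 6) + 1/3 * (of_bool (L 1 = L 7) + of_bool (L 2 = L 6)
    + of_bool (L 2 \<noteq> L 7) + of_bool (L 2 = L 8) + of_bool (L 3 = L 7) + of_bool (L 3 = L 9)
    + of_bool (L 3 = L 10) + of_bool (L 4 = L 8) + of_bool (L 4 \<noteq> L 9) + of_bool (L 4 = L 10)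
    + of_bool (L 5 = L 8) + of_bool (L 5 = L 9) + of_bool (L 5 \<noteq> L 10))"
proof -
  have "xsum y19 (E_L G19_E G19_R L) = xsum y19 {e \<in> G19_E. e \<in> E_L G19_E G19_R L}"
    using E_L_subset[OF G19_R_subset_E] by (intro arg_cong[where f = "xsum y19"]) blast
  then show ?thesis
    unfolding xsum_filter_G19_E
    by (simp add: G19_edge_list_def mem_E_L_doubleton G19_E_def G19_R_def y19_def doubleton_eq_iff)
qed

lemma card_G19_labelled:
  "card {v \<in> G19_V. L v} = of_bool (L 1) + of_bool (L 2) + of_bool (L 3) + of_bool (L 4)
    + of_bool (L 5) + of_bool (L 6) + of_bool (L 7) + of_bool (L 8) + of_bool (L 9) + of_bool (L 10)"
proof -
  have "card {v \<in> G19_V. L v} = (\<Sum>v\<leftarrow>[1,2,3,4,5,6,7,8,9,10]. of_bool (L v))"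
    unfolding card_eq_sum G19_V_eq_list by (subst sum_filter_conv_sum_list) simp_all
  then show ?thesis
    by simp
qed

lemma y19_E_L_ge_1:
  assumes "L \<in> labelings_all G19_V 5"
  shows "xsum y19 (E_L G19_E G19_R L) \<ge> 1"
proof -
  have "card {v \<in> G19_V. L v} mod 2 = 1"
    using assms unfolding labelings_all_def by simp
  then show ?thesis
    unfolding xsum_y19_E_L card_G19_labelled
    by (cases "L 1"; cases "L 2"; cases "L 3"; cases "L 4"; cases "L 5"; cases "L 6";
        cases "L 7"; cases "L 8"; cases "L 9"; cases "L 10"; simp)
qed

theorem lemma19:
  shows "y19 \<in> Q_GR G19_V G19_E G19_R 5"
  unfolding Q_GR_def
  using y19_degree y19_E_L_ge_1 by (auto simp: y19_def)

end
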